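(* Let $G$ be a finite group. Then $G$ contains an element whose order is a composite number if and only if $g(OD(G))=3$.
   Context: For a finite group $G$, $o(x)$ denotes the order of $x\in G$. The order-divisor graph $OD(G)$ is the simple undirected graph with vertex set $G$, in which two distinct vertices $x,y$ are adjacent if and only if $o(x)\neq o(y)$ and either $o(x)\mid o(y)$ or $o(y)\mid o(x)$. The girth $g(\Gamma)$ of a graph $\Gamma$ is the length of a shortest cycle in $\Gamma$ (taken to be $0$ if $\Gamma$ has no cycle). *)

theory Defs
  imports "HOL-Algebra.Multiplicative_Group" "HOL-Computational_Algebra.Primes"
begin

definition is_cycle :: "'a set \<Rightarrow> ('a \<Rightarrow> 'a \<Rightarrow> bool) \<Rightarrow> 'a list \<Rightarrow> bool" where
  "is_cycle V E vs \<longleftrightarrow> length vs \<ge> 3 \<and> distinct vs \<and> set vs \<subseteq> V \<and>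
     (\<forall>i < length vs. E (vs ! i) (vs ! ((i + 1) mod length vs)))"

definition girth :: "'a set \<Rightarrow> ('a \<Rightarrow> 'a \<Rightarrow> bool) \<Rightarrow> nat" where
  "girth V E = (if \<exists>vs. is_cycle V E vs
                then (LEAST k. \<exists>vs. is_cycle V E vs \<and> length vs = k) else 0)"

definition od_adj :: "('a, 'b) monoid_scheme \<Rightarrow> 'a \<Rightarrow> 'a \<Rightarrow> bool" where
  "od_adj G x y \<longleftrightarrow> x \<noteq> y \<and> group.ord G x \<noteq> group.ord G y \<and>
     (group.ord G x dvd group.ord G y \<or> group.ord G y dvd group.ord G x)"

definition composite :: "nat \<Rightarrow> bool" where
  "composite n \<longleftrightarrow> n > 1 \<and> \<not> prime n"

end

theory Submission
  imports Defs
begin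

text \<open>
  No cycle is shorter than three, so the girth of \<open>OD(G)\<close> is three exactly when there is a
  triangle, i.e. three elements whose orders are distinct and pairwise comparable under
  divisibility. Among three such orders, some \<open>d\<close> is neither \<open>1\<close> nor the largest order \<open>m\<close>;
  comparability forces \<open>d\<close> to divide \<open>m\<close>, so \<open>m\<close> is composite. Conversely, if \<open>x\<close> has
  composite order \<open>n\<close> and \<open>p\<close> is a prime divisor of \<open>n\<close>, the orders \<open>1\<close>, \<open>p\<close>, \<open>n\<close> of
  \<open>1\<close>, \<open>x\<^sup>n\<^sup>/\<^sup>p\<close>, \<open>x\<close> form a divisibility chain, hence a triangle.
\<close>

lemma girth_eq_3_iff: "girth V E = 3 \<longleftrightarrow> (\<exists>vs. is_cycle V E vs \<and> length vs = 3)"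
proof
  assume girth: "girth V E = 3"
  then have "\<exists>vs. is_cycle V E vs"
    unfolding girth_def by (auto split: if_splits)
  then have "\<exists>k vs. is_cycle V E vs \<and> length vs = k"
    by blast
  from LeastI_ex[OF this] girth show "\<exists>vs. is_cycle V E vs \<and> length vs = 3"
    unfolding girth_def by (auto split: if_splits)
next
  assume triangle: "\<exists>vs. is_cycle V E vs \<and> length vs = 3"
  have "(LEAST k. \<exists>vs. is_cycle V E vs \<and> length vs = k) = 3"
    by (rule Least_equality) (use triangle in \<open>auto simp: is_cycle_def\<close>)
  with triangle show "girth V E = 3"
    unfolding girth_def by auto
qed

lemma is_cycle_triple_iff:
  "is_cycle V E [a, b, c] \<longleftrightarrow> distinct [a, b, c] \<and> {a, b, c} \<subseteq> V \<and> E a b \<and> E b c \<and> E c a"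
proof -
  have length_3: "length [a, b, c] = 3"
    by simp
  have less_3: "(\<forall>i < 3. P i) \<longleftrightarrow> P 0 \<and> P 1 \<and> P 2" for P :: "nat \<Rightarrow> bool"
    by (auto simp: eval_nat_numeral less_Suc_eq)
  show ?thesis
    unfolding is_cycle_def length_3 less_3 by simp
qed

lemma is_cycle_length_3_iff:
  "(\<exists>vs. is_cycle V E vs \<and> length vs = 3) \<longleftrightarrow>
     (\<exists>a b c. distinct [a, b, c] \<and> {a, b, c} \<subseteq> V \<and> E a b \<and> E b c \<and> E c a)"
proof -
  have "length vs = 3 \<longleftrightarrow> (\<exists>a b c. vs = [a, b, c])" for vs :: "'a list"
    by (auto simp: numeral_3_eq_3 length_Suc_conv)
  then have "(\<exists>vs. is_cycle V E vs \<and> length vs = 3) \<longleftrightarrow> (\<exists>a b c. is_cycle V E [a, b, c])"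
    by auto
  then show ?thesis
    by (simp only: is_cycle_triple_iff)
qed

lemma composite_Max_of_dvd_chain:
  fixes S :: "nat set"
  assumes card: "card S \<ge> 3" and pos: "0 \<notin> S"
    and comparable: "\<And>m n. m \<in> S \<Longrightarrow> n \<in> S \<Longrightarrow> m dvd n \<or> n dvd m"
  shows "composite (Max S)"
proof -
  have "finite S"
    using card by (metis card.infinite not_numeral_le_zero)
  have "\<exists>d \<in> S. d \<noteq> Max S \<and> d \<noteq> 1"
  proof (rule ccontr)
    assume "\<not> (\<exists>d \<in> S. d \<noteq> Max S \<and> d \<noteq> 1)"
    then have "card S \<le> card {Max S, 1}"
      by (intro card_mono) auto
    also have "\<dots> \<le> 2"
      by (simp add: card_insert_le_m1)
    finally show False
      using card by simp
  qed
  then obtain d where d: "d \<in> S" "d \<noteq> Max S" "d \<noteq> 1"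
    by blast
  have "d \<le> Max S" "Max S \<in> S"
    using \<open>finite S\<close> d(1) by (auto intro: Max_in)
  have "0 < d"
    using d(1) pos by (auto intro: gr0I)
  then have "\<not> Max S dvd d"
    using d(2) \<open>d \<le> Max S\<close> by (auto dest: dvd_imp_le)
  then have "d dvd Max S"
    using comparable[OF d(1) \<open>Max S \<in> S\<close>] by blast
  then show ?thesis
    unfolding composite_def prime_nat_iff using d(2,3) \<open>0 < d\<close> \<open>d \<le> Max S\<close> by auto
qed

lemma composite_obtain_prime_divisor:
  assumes "composite n"
  obtains p where "prime p" "p dvd n" "p < n"
proof -
  have "n \<noteq> 1"
    using assms unfolding composite_def by simp
  then obtain p where p: "prime p" "p dvd n"
    using prime_factor_nat by blast
  moreover have "p \<le> n"
    using p(2) assms unfolding composite_def by (auto intro: dvd_imp_le)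
  moreover have "p \<noteq> n"
    using p(1) assms unfolding composite_def by auto
  ultimately show thesis
    using that by simp
qed

lemma (in group) ord_pow_ord_div:
  assumes "x \<in> carrier G" "d dvd ord x" "ord x \<noteq> 0"
  shows "ord (x [^] (ord x div d)) = d"
proof -
  have "ord x div d dvd ord x" "ord x div d \<noteq> 0"
    using assms(2,3) by auto
  with assms(1,2) show ?thesis
    by (simp add: ord_pow dvd_div_eq_mult dvd_div_iff_mult)
qed

theorem mainTheorem4:
  fixes G :: "('a, 'b) monoid_scheme"
  assumes "group G" and "finite (carrier G)"
  shows "(\<exists>x \<in> carrier G. composite (group.ord G x)) \<longleftrightarrow> girth (carrier G) (od_adj G) = 3"
proof -
  interpret group G by fact
  show ?thesis
    unfolding girth_eq_3_iff is_cycle_length_3_iff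
  proof
    assume "\<exists>x \<in> carrier G. composite (ord x)"
    then obtain x where x: "x \<in> carrier G" "composite (ord x)" by blast
    obtain p where p: "prime p" "p dvd ord x" "p < ord x"
      using x(2) by (rule composite_obtain_prime_divisor)
    define y where "y = x [^]\<^bsub>G\<^esub> (ord x div p)"
    have "y \<in> carrier G" "ord y = p"
      using x p by (auto simp: y_def ord_pow_ord_div)
    moreover have "1 < p"
      using p(1) prime_gt_1_nat by blast
    ultimately show "\<exists>a b c. distinct [a, b, c] \<and> {a, b, c} \<subseteq> carrier G \<and>
        od_adj G a b \<and> od_adj G b c \<and> od_adj G c a"
      using x p by (intro exI[of _ "\<one>\<^bsub>G\<^esub>"] exI[of _ y] exI[of _ x]) (auto simp: od_adj_def)
  next
    assume "\<exists>a b c. distinct [a, b, c] \<and> {a, b, c} \<subseteq> carrier G \<and>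
        od_adj G a b \<and> od_adj G b c \<and> od_adj G c a"
    then obtain a b c where carrier: "{a, b, c} \<subseteq> carrier G"
      and adj: "od_adj G a b" "od_adj G b c" "od_adj G c a" by blast
    define S where "S = {ord a, ord b, ord c}"
    have "card S \<ge> 3"
      using adj by (simp add: S_def od_adj_def)
    moreover have "0 \<notin> S"
      using carrier ord_ge_1[OF assms(2)] by (force simp: S_def)
    moreover have "m dvd n \<or> n dvd m" if "m \<in> S" "n \<in> S" for m n
      using that adj by (auto simp: S_def od_adj_def)
    ultimately have "composite (Max S)"
      by (rule composite_Max_of_dvd_chain)
    moreover have "Max S \<in> S"
      unfolding S_def by (rule Max_in) auto
    ultimately show "\<exists>x \<in> carrier G. composite (ord x)"
      using carrier by (auto simp: S_def)
  qed
qed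

end
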